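(* Let $\mathcal{C}$ be a $\beta$-avoiding simplicial complex and let $G$ be its $1$-skeleton. Then $G$ is one of the following: (a) a complete graph $K_N$; (b) two complete graphs glued along a (possibly empty) common clique; (c) an iterated cone over a $4$-cycle, i.e. the join of a $4$-cycle with a complete graph $K_p$ for some $p\ge0$.
   Context: A simplicial complex on a finite ground set $V$ is a family of subsets of $V$ closed under subsets; a vertex $v$ is non-ghost if $\{v\}\in\mathcal{C}$. The $1$-skeleton of $\mathcal{C}$ is the graph whose vertices are the non-ghost vertices and whose edges are the $2$-element faces. For $S\subseteq V$, $\mathcal{C}\setminus S$ is the induced subcomplex $\{F\in\mathcal{C}:F\cap S=\emptyset\}$ on $V\setminus S$; for a face $R$, $\operatorname{link}_R(\mathcal{C})=\{F\setminus R: R\subseteq F\in\mathcal{C}\}$ on $V\setminus R$. A minor is $\operatorname{link}_R(\mathcal{C}\setminus S)$ with $S\cap R=\emptyset$, $R$ a face. Alexander dual of $\mathcal{D}$ on $V$: $\{S\subseteq V: V\setminus S\notin\mathcal{D}\}$. $\mathcal{C}$ is $\beta$-avoiding if no minor is isomorphic (via a bijection of ground sets carrying faces to faces) to any of: $P_4$ (on $\{1,2,3,4\}$, facets $12,23,34$); $O_6$ (on $\{1,\dots,6\}$, faces the subsets containing none of $\{1,2\},\{3,4\},\{5,6\}$) or its dual $O_6^*$; $J_1$ (on $\{1,\dots,5\}$, facets $12,15,234,345$) or $J_1^*$ (facets $134,235,245$); $J_2$ (on $\{1,\dots,5\}$, facets $12,235,34,145$); $\partial\Delta_n\sqcup\{v\}$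 for $n\ge1$ (all proper subsets of an $(n+1)$-set together with one extra isolated vertex). *)

theory Defs
  imports Main
begin

definition simplicial_complex :: "'a set \<Rightarrow> 'a set set \<Rightarrow> bool" where
  "simplicial_complex V C \<longleftrightarrow> finite V \<and> (\<forall>F\<in>C. F \<subseteq> V) \<and> (\<forall>F\<in>C. \<forall>G. G \<subseteq> F \<longrightarrow> G \<in> C)"

text \<open>Induced subcomplex C minus S (its ground set is V - S).\<close>
definition cdel :: "'a set set \<Rightarrow> 'a set \<Rightarrow> 'a set set" where
  "cdel C S = {F \<in> C. F \<inter> S = {}}"

text \<open>Link of a face R (its ground set is V - R).\<close>
definition clink :: "'a set \<Rightarrow> 'a set set \<Rightarrow> 'a set set" where
  "clink R C = {F - R | F. F \<in> C \<and> R \<subseteq> F}"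

definition alex_dual :: "'a set \<Rightarrow> 'a set set \<Rightarrow> 'a set set" where
  "alex_dual V D = {S. S \<subseteq> V \<and> V - S \<notin> D}"

definition cplx_iso :: "'a set \<Rightarrow> 'a set set \<Rightarrow> 'b set \<Rightarrow> 'b set set \<Rightarrow> bool" where
  "cplx_iso V1 C1 V2 C2 \<longleftrightarrow>
     (\<exists>f. bij_betw f V1 V2 \<and> (\<forall>F. F \<subseteq> V1 \<longrightarrow> (F \<in> C1 \<longleftrightarrow> f ` F \<in> C2)))"

definition gen_cplx :: "'a set set \<Rightarrow> 'a set set" where
  "gen_cplx Fs = {F. \<exists>G\<in>Fs. F \<subseteq> G}"

definition P4 :: "nat set set" where
  "P4 = gen_cplx {{1,2},{2,3},{3,4}}"

definition O6 :: "nat set set" where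
  "O6 = {F. F \<subseteq> {1..6} \<and> \<not> {1,2} \<subseteq> F \<and> \<not> {3,4} \<subseteq> F \<and> \<not> {5,6} \<subseteq> F}"

definition O6_dual :: "nat set set" where
  "O6_dual = alex_dual {1..6} O6"

definition J1 :: "nat set set" where
  "J1 = gen_cplx {{1,2},{1,5},{2,3,4},{3,4,5}}"

definition J1_dual :: "nat set set" where
  "J1_dual = gen_cplx {{1,3,4},{2,3,5},{2,4,5}}"

definition J2 :: "nat set set" where
  "J2 = gen_cplx {{1,2},{2,3,5},{3,4},{1,4,5}}"

definition bdry_plus_pt :: "nat \<Rightarrow> nat set set" where
  "bdry_plus_pt n = {F. F \<subset> {0..n}} \<union> {{Suc n}}"

definition is_minor_of :: "'a set \<Rightarrow> 'a set set \<Rightarrow> 'a set \<Rightarrow> 'a set set \<Rightarrow> bool" where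
  "is_minor_of V C W M \<longleftrightarrow>
     (\<exists>S R. S \<subseteq> V \<and> S \<inter> R = {} \<and> R \<in> cdel C S \<and>
            W = V - S - R \<and> M = clink R (cdel C S))"

definition beta_avoiding :: "'a set \<Rightarrow> 'a set set \<Rightarrow> bool" where
  "beta_avoiding V C \<longleftrightarrow>
     (\<forall>W M. is_minor_of V C W M \<longrightarrow>
        \<not> cplx_iso W M {1..4} P4 \<and>
        \<not> cplx_iso W M {1..6} O6 \<and>
        \<not> cplx_iso W M {1..6} O6_dual \<and>
        \<not> cplx_iso W M {1..5} J1 \<and>
        \<not> cplx_iso W M {1..5} J1_dual \<and>
        \<not> cplx_iso W M {1..5} J2 \<and>
        (\<forall>n\<ge>1. \<not> cplx_iso W M {0..Suc n} (bdry_plus_pt n)))"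

definition skel_vertices :: "'a set \<Rightarrow> 'a set set \<Rightarrow> 'a set" where
  "skel_vertices V C = {v \<in> V. {v} \<in> C}"

definition skel_edges :: "'a set set \<Rightarrow> 'a set set" where
  "skel_edges C = {e \<in> C. card e = 2}"

definition clique_edges :: "'a set \<Rightarrow> 'a set set" where
  "clique_edges A = {{u, v} | u v. u \<in> A \<and> v \<in> A \<and> u \<noteq> v}"

end

theory Submission
  imports Defs
begin

text \<open>Let H be the graph of non-adjacent pairs of vertices. Three pairwise non-adjacent vertices
  span the minor \<open>\<partial>\<Delta>\<^sub>1 \<squnion> {v}\<close>, so H is triangle-free, and an induced P4 is excluded in
  the skeleton and hence, P4 being self-complementary, in H. In vertex links the same two obstructions
  force triangles to be faces, which turns a J1 configuration or an octahedron in the skeleton into an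
  induced J1, J2 or O6. Consequently every 3-path of H closes up to a 4-cycle. Fix an edge u w of H:
  either every edge of H joins an H-neighbour of u to one of w, and the skeleton is the union of the
  cliques on the vertices outside the H-neighbourhood of u, resp. of w; or H has an edge x y with no
  H-edge to u or w, so the skeleton contains the 4-cycle u x w y, and excluding J1 and the octahedron
  makes every other vertex a cone point over it.\<close>

text \<open>\<open>Pos\<close> and \<open>Neg\<close> play the role of the facets and the minimal non-faces of \<open>K\<close>; checking
  their images under \<open>h\<close> suffices for an isomorphism onto a downward closed \<open>M\<close>.\<close>
lemma cplx_iso_by_cover:
  fixes h :: "'b \<Rightarrow> 'a"
  assumes inj: "inj_on h U" and img: "h ` U = W"
    and down_closed: "\<forall>X\<in>M. \<forall>Y\<subseteq>X. Y \<in> M"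
    and pos: "\<forall>T\<in>Pos. h ` T \<in> M" and neg: "\<forall>N\<in>Neg. h ` N \<notin> M"
    and cover: "\<forall>F\<in>Pow U. ((\<exists>T\<in>Pos. F \<subseteq> T) \<and> F \<in> K) \<or> ((\<exists>N\<in>Neg. N \<subseteq> F) \<and> F \<notin> K)"
  shows "cplx_iso W M U K"
proof -
  let ?f = "inv_into U h"
  have bij: "bij_betw ?f W U"
    using bij_betw_inv_into inj img by (auto simp: bij_betw_def)
  have "F \<in> M \<longleftrightarrow> ?f ` F \<in> K" if F: "F \<subseteq> W" for F
  proof -
    define G where "G = ?f ` F"
    have "G \<subseteq> U" unfolding G_def using F img by (auto intro: inv_into_into)
    moreover have hG: "h ` G = F" unfolding G_def using F img by (simp add: image_inv_into_cancel)
    ultimately consider T where "T \<in> Pos" "G \<subseteq> T" "G \<in> K" | N where "N \<in> Neg" "N \<subseteq> G" "G \<notin> K"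
      using cover by blast
    then show ?thesis
    proof cases
      case 1
      then have "F \<subseteq> h ` T" using hG by blast
      then show ?thesis using 1 pos down_closed G_def by blast
    next
      case 2
      then have "h ` N \<subseteq> F" using hG by blast
      then show ?thesis using 2 neg down_closed G_def by blast
    qed
  qed
  then show ?thesis unfolding cplx_iso_def using bij by blast
qed

definition adj :: "'a set set \<Rightarrow> 'a \<Rightarrow> 'a \<Rightarrow> bool" where
  "adj K x y \<longleftrightarrow> x \<noteq> y \<and> {x, y} \<in> K"

definition nonadj :: "'a set set \<Rightarrow> 'a \<Rightarrow> 'a \<Rightarrow> bool" where
  "nonadj K x y \<longleftrightarrow> {x} \<in> K \<and> {y} \<in> K \<and> x \<noteq> y \<and> {x, y} \<notin> K"

lemma adj_commute: "adj K x y \<longleftrightarrow> adj K y x"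
  unfolding adj_def by (auto simp: insert_commute)

lemma nonadj_commute: "nonadj K x y \<longleftrightarrow> nonadj K y x"
  unfolding nonadj_def by (auto simp: insert_commute)

lemma adj_imp_not_nonadj: "adj K x y \<Longrightarrow> \<not> nonadj K x y"
  unfolding adj_def nonadj_def by blast

lemma adj_if_not_nonadj: "{x} \<in> K \<Longrightarrow> {y} \<in> K \<Longrightarrow> x \<noteq> y \<Longrightarrow> \<not> nonadj K x y \<Longrightarrow> adj K x y"
  unfolding adj_def nonadj_def by blast

lemma doubleton_in_clique_edges: "s \<noteq> t \<Longrightarrow> {s, t} \<in> clique_edges A \<longleftrightarrow> s \<in> A \<and> t \<in> A"
  unfolding clique_edges_def by (auto simp: doubleton_eq_iff)

lemma clique_edges_mono: "A \<subseteq> B \<Longrightarrow> clique_edges A \<subseteq> clique_edges B"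
  unfolding clique_edges_def by blast

lemma clique_edgesE:
  assumes "e \<in> clique_edges A"
  obtains s t where "s \<in> A" "t \<in> A" "s \<noteq> t" "e = {s, t}"
  using assms unfolding clique_edges_def by blast

lemma doubleton_in_join_edges:
  "{s, t} \<in> {{p, q} | p q. p \<in> A \<and> q \<in> B} \<longleftrightarrow> (s \<in> A \<and> t \<in> B) \<or> (t \<in> A \<and> s \<in> B)"
  by (auto simp: doubleton_eq_iff)

lemma doubleton_in_cone_square_edges:
  assumes "distinct [a, b, c, d]" "{a, b, c, d} \<inter> P = {}"
    and "s \<in> {a, b, c, d} \<union> P" "t \<in> {a, b, c, d} \<union> P" "s \<noteq> t"
  shows "{s, t} \<in> {{a, b}, {b, c}, {c, d}, {d, a}} \<union> clique_edges P \<union> {{p, q} | p q. p \<in> {a, b, c, d} \<and> q \<in> P}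
    \<longleftrightarrow> {s, t} \<noteq> {a, c} \<and> {s, t} \<noteq> {b, d}"
proof (cases "s \<in> P \<or> t \<in> P")
  case True
  then have "{s, t} \<noteq> {a, c} \<and> {s, t} \<noteq> {b, d}"
    using assms(2) by (auto simp: doubleton_eq_iff)
  moreover have "{s, t} \<in> clique_edges P \<union> {{p, q} | p q. p \<in> {a, b, c, d} \<and> q \<in> P}"
    using True assms(3-5) by (auto simp: doubleton_in_clique_edges doubleton_in_join_edges)
  ultimately show ?thesis by (simp only: Un_iff) (elim disjE; simp)
next
  case False
  then have "s \<in> {a, b, c, d}" "t \<in> {a, b, c, d}" using assms by blast+
  moreover have "{s, t} \<notin> clique_edges P \<union> {{p, q} | p q. p \<in> {a, b, c, d} \<and> q \<in> P}"
    using False assms(5) by (auto simp: doubleton_in_clique_edges doubleton_in_join_edges)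
  ultimately show ?thesis
    using assms(1,5) by (auto simp: doubleton_eq_iff)
qed

lemma small_nat_intervals:
  "{1..4::nat} = {1, 2, 3, 4}" "{1..5::nat} = {1, 2, 3, 4, 5}" "{1..6::nat} = {1, 2, 3, 4, 5, 6}"
  "{0..Suc 1} = {0, 1, 2::nat}" "{0..Suc 0} = {0, 1::nat}"
  by auto

locale beta_avoiding_complex =
  fixes V :: "'a set" and C :: "'a set set"
  assumes complex: "simplicial_complex V C"
    and avoiding: "beta_avoiding V C"
    and empty_face: "{} \<in> C"
begin

lemma face_subset: "X \<in> C \<Longrightarrow> Y \<subseteq> X \<Longrightarrow> Y \<in> C"
  using complex unfolding simplicial_complex_def by blast

lemma face_in_ground: "X \<in> C \<Longrightarrow> X \<subseteq> V"
  using complex unfolding simplicial_complex_def by blast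

lemma induced_is_minor:
  assumes "W \<subseteq> V"
  shows "is_minor_of V C W {F \<in> C. F \<subseteq> W}"
  unfolding is_minor_of_def
proof (intro exI conjI)
  show "V - W \<subseteq> V" "(V - W) \<inter> {} = {}" by blast+
  show "W = V - (V - W) - {}" using assms by blast
  show "{} \<in> cdel C (V - W)" using empty_face unfolding cdel_def by blast
  show "{F \<in> C. F \<subseteq> W} = clink {} (cdel C (V - W))"
    using face_in_ground unfolding clink_def cdel_def by auto
qed

lemma link_is_minor:
  assumes "W \<subseteq> V" "{v} \<in> C" "v \<notin> W"
  shows "is_minor_of V C W {X. X \<subseteq> W \<and> insert v X \<in> C}"
  unfolding is_minor_of_def
proof (intro exI conjI)
  show "V - W - {v} \<subseteq> V" "(V - W - {v}) \<inter> {v} = {}" by blast+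
  show "{v} \<in> cdel C (V - W - {v})" using assms unfolding cdel_def by blast
  show "W = V - (V - W - {v}) - {v}" using assms by blast
  show "{X. X \<subseteq> W \<and> insert v X \<in> C} = clink {v} (cdel C (V - W - {v}))"
  proof
    show "{X. X \<subseteq> W \<and> insert v X \<in> C} \<subseteq> clink {v} (cdel C (V - W - {v}))"
    proof
      fix X assume X: "X \<in> {X. X \<subseteq> W \<and> insert v X \<in> C}"
      then have "insert v X \<in> cdel C (V - W - {v})" unfolding cdel_def by auto
      moreover have "X = insert v X - {v}" using X assms(3) by auto
      ultimately show "X \<in> clink {v} (cdel C (V - W - {v}))" unfolding clink_def by blast
    qed
    show "clink {v} (cdel C (V - W - {v})) \<subseteq> {X. X \<subseteq> W \<and> insert v X \<in> C}"
    proof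
      fix X assume "X \<in> clink {v} (cdel C (V - W - {v}))"
      then obtain F where F: "X = F - {v}" "F \<in> C" "F \<inter> (V - W - {v}) = {}" "v \<in> F"
        unfolding clink_def cdel_def by blast
      then show "X \<in> {X. X \<subseteq> W \<and> insert v X \<in> C}"
        using face_in_ground[OF F(2)] by (auto simp: insert_absorb)
    qed
  qed
qed

lemma induced_down_closed: "\<forall>X\<in>{F \<in> C. F \<subseteq> W}. \<forall>Y\<subseteq>X. Y \<in> {F \<in> C. F \<subseteq> W}"
  using face_subset by blast

lemma link_down_closed:
  "\<forall>X\<in>{X. X \<subseteq> W \<and> insert v X \<in> C}. \<forall>Y\<subseteq>X. Y \<in> {X. X \<subseteq> W \<and> insert v X \<in> C}"
proof (intro ballI allI impI)
  fix X Y assume "X \<in> {X. X \<subseteq> W \<and> insert v X \<in> C}" "Y \<subseteq> X"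
  then show "Y \<in> {X. X \<subseteq> W \<and> insert v X \<in> C}"
    using face_subset[of "insert v X" "insert v Y"] by blast
qed

lemma minor_not_three_points:
  assumes minor: "is_minor_of V C {a, b, c} M" and "\<forall>X\<in>M. \<forall>Y\<subseteq>X. Y \<in> M"
    and "a \<noteq> b" "a \<noteq> c" "b \<noteq> c"
    and "{a} \<in> M" "{b} \<in> M" "{c} \<in> M" and "{a, b} \<notin> M" "{a, c} \<notin> M" "{b, c} \<notin> M"
  shows False
proof -
  let ?h = "\<lambda>i::nat. if i = 0 then a else if i = 1 then b else c"
  have "cplx_iso {a, b, c} M {0..Suc 1} (bdry_plus_pt 1)"
  proof (rule cplx_iso_by_cover[where h = ?h and Pos = "{{0}, {1}, {2}}" and Neg = "{{0, 1}, {0, 2}, {1, 2}}"])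
    show "inj_on ?h {0..Suc 1}" "?h ` {0..Suc 1} = {a, b, c}"
      unfolding small_nat_intervals using assms by auto
    show "\<forall>T\<in>{{0}, {1}, {2}}. ?h ` T \<in> M" "\<forall>N\<in>{{0, 1}, {0, 2}, {1, 2}}. ?h ` N \<notin> M"
      using assms by (simp_all add: insert_commute)
    show "\<forall>F\<in>Pow {0..Suc 1}. ((\<exists>T\<in>{{0}, {1}, {2}}. F \<subseteq> T) \<and> F \<in> bdry_plus_pt 1)
        \<or> ((\<exists>N\<in>{{0, 1}, {0, 2}, {1, 2}}. N \<subseteq> F) \<and> F \<notin> bdry_plus_pt 1)"
      unfolding small_nat_intervals bdry_plus_pt_def by (simp add: Pow_insert small_nat_intervals psubset_eq)
  qed fact
  then show False using avoiding minor unfolding beta_avoiding_def by force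
qed

lemma minor_not_P4:
  assumes minor: "is_minor_of V C {a, b, c, d} M" and "\<forall>X\<in>M. \<forall>Y\<subseteq>X. Y \<in> M"
    and "distinct [a, b, c, d]"
    and "{a, b} \<in> M" "{b, c} \<in> M" "{c, d} \<in> M" and "{a, c} \<notin> M" "{b, d} \<notin> M" "{a, d} \<notin> M"
  shows False
proof -
  let ?h = "\<lambda>i::nat. if i = 1 then a else if i = 2 then b else if i = 3 then c else d"
  have "cplx_iso {a, b, c, d} M {1..4} P4"
  proof (rule cplx_iso_by_cover[where h = ?h and Pos = "{{1, 2}, {2, 3}, {3, 4}}" and Neg = "{{1, 3}, {2, 4}, {1, 4}}"])
    show "inj_on ?h {1..4}" "?h ` {1..4} = {a, b, c, d}"
      unfolding small_nat_intervals using assms by auto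
    show "\<forall>T\<in>{{1, 2}, {2, 3}, {3, 4}}. ?h ` T \<in> M" "\<forall>N\<in>{{1, 3}, {2, 4}, {1, 4}}. ?h ` N \<notin> M"
      using assms by (simp_all add: insert_commute)
    show "\<forall>F\<in>Pow {1..4}. ((\<exists>T\<in>{{1, 2}, {2, 3}, {3, 4}}. F \<subseteq> T) \<and> F \<in> P4)
        \<or> ((\<exists>N\<in>{{1, 3}, {2, 4}, {1, 4}}. N \<subseteq> F) \<and> F \<notin> P4)"
      unfolding small_nat_intervals P4_def gen_cplx_def by (simp add: Pow_insert)
  qed fact
  then show False using avoiding minor unfolding beta_avoiding_def by force
qed

lemma nonadj_triangle_free:
  assumes "nonadj C a b" "nonadj C b c" "nonadj C a c"
  shows False
proof -
  have "{a, b, c} \<subseteq> V" using assms face_in_ground unfolding nonadj_def by blast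
  from minor_not_three_points[OF induced_is_minor[OF this] induced_down_closed]
  show False using assms unfolding nonadj_def by (auto simp: insert_commute)
qed

lemma link_not_three_points:
  assumes "{v, a} \<in> C" "{v, b} \<in> C" "{v, c} \<in> C" "distinct [v, a, b, c]"
    and "{v, a, b} \<notin> C" "{v, a, c} \<notin> C" "{v, b, c} \<notin> C"
  shows False
proof -
  have "{a, b, c} \<subseteq> V" using assms face_in_ground by blast
  moreover have "{v} \<in> C" using assms(1) face_subset by blast
  ultimately show False
    by (rule minor_not_three_points[OF link_is_minor link_down_closed]) (use assms in auto)
qed

text \<open>P4 is self-complementary: a 3-path in the complement is an induced 3-path of the skeleton.\<close>
lemma nonadj_no_induced_P4:
  assumes "nonadj C a b" "nonadj C b c" "nonadj C c d" "adj C a c" "adj C b d" "adj C a d"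
  shows False
proof -
  have "{b, d, a, c} \<subseteq> V" using assms face_in_ground unfolding adj_def by blast
  from minor_not_P4[OF induced_is_minor[OF this] induced_down_closed]
  show False using assms unfolding adj_def nonadj_def by (auto simp: insert_commute)
qed

lemma link_not_P4:
  assumes "distinct [v, a, b, c, d]"
    and "{v, a, b} \<in> C" "{v, b, c} \<in> C" "{v, c, d} \<in> C" "{v, a, c} \<notin> C" "{v, b, d} \<notin> C" "{v, a, d} \<notin> C"
  shows False
proof -
  have "{a, b, c, d} \<subseteq> V" using assms face_in_ground by blast
  moreover have "{v} \<in> C" using assms(2) face_subset by blast
  ultimately show False
    by (rule minor_not_P4[OF link_is_minor link_down_closed]) (use assms in auto)
qed

lemma no_induced_J1:
  assumes distinct: "distinct [z1, z2, z3, z4, z5]"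
    and faces: "{z1, z2} \<in> C" "{z1, z5} \<in> C" "{z2, z3, z4} \<in> C" "{z3, z4, z5} \<in> C"
    and nonfaces: "{z1, z3} \<notin> C" "{z1, z4} \<notin> C" "{z2, z5} \<notin> C"
  shows False
proof -
  let ?W = "{z1, z2, z3, z4, z5}"
  let ?h = "\<lambda>i::nat. if i = 1 then z1 else if i = 2 then z2 else if i = 3 then z3 else if i = 4 then z4 else z5"
  have W: "?W \<subseteq> V" using faces face_in_ground by blast
  have "cplx_iso ?W {F \<in> C. F \<subseteq> ?W} {1..5} J1"
  proof (rule cplx_iso_by_cover[where h = ?h and Pos = "{{1, 2}, {1, 5}, {2, 3, 4}, {3, 4, 5}}"
        and Neg = "{{1, 3}, {1, 4}, {2, 5}}"])
    show "inj_on ?h {1..5}" "?h ` {1..5} = ?W"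
      unfolding small_nat_intervals using distinct by auto
    show "\<forall>T\<in>{{1, 2}, {1, 5}, {2, 3, 4}, {3, 4, 5}}. ?h ` T \<in> {F \<in> C. F \<subseteq> ?W}"
      "\<forall>N\<in>{{1, 3}, {1, 4}, {2, 5}}. ?h ` N \<notin> {F \<in> C. F \<subseteq> ?W}"
      using faces nonfaces by (simp_all add: insert_commute)
    show "\<forall>F\<in>Pow {1..5}. ((\<exists>T\<in>{{1, 2}, {1, 5}, {2, 3, 4}, {3, 4, 5}}. F \<subseteq> T) \<and> F \<in> J1)
        \<or> ((\<exists>N\<in>{{1, 3}, {1, 4}, {2, 5}}. N \<subseteq> F) \<and> F \<notin> J1)"
      unfolding small_nat_intervals J1_def gen_cplx_def by (simp add: Pow_insert)
  qed (rule induced_down_closed)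
  then show False using avoiding induced_is_minor[OF W] unfolding beta_avoiding_def by blast
qed

lemma no_induced_J2:
  assumes distinct: "distinct [z1, z2, z3, z4, z5]"
    and faces: "{z1, z2} \<in> C" "{z2, z3, z5} \<in> C" "{z3, z4} \<in> C" "{z1, z4, z5} \<in> C"
    and nonfaces: "{z1, z3} \<notin> C" "{z2, z4} \<notin> C" "{z1, z2, z5} \<notin> C" "{z3, z4, z5} \<notin> C"
  shows False
proof -
  let ?W = "{z1, z2, z3, z4, z5}"
  let ?h = "\<lambda>i::nat. if i = 1 then z1 else if i = 2 then z2 else if i = 3 then z3 else if i = 4 then z4 else z5"
  have W: "?W \<subseteq> V" using faces face_in_ground by blast
  have "cplx_iso ?W {F \<in> C. F \<subseteq> ?W} {1..5} J2"
  proof (rule cplx_iso_by_cover[where h = ?h and Pos = "{{1, 2}, {2, 3, 5}, {3, 4}, {1, 4, 5}}"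
        and Neg = "{{1, 3}, {2, 4}, {1, 2, 5}, {3, 4, 5}}"])
    show "inj_on ?h {1..5}" "?h ` {1..5} = ?W"
      unfolding small_nat_intervals using distinct by auto
    show "\<forall>T\<in>{{1, 2}, {2, 3, 5}, {3, 4}, {1, 4, 5}}. ?h ` T \<in> {F \<in> C. F \<subseteq> ?W}"
      "\<forall>N\<in>{{1, 3}, {2, 4}, {1, 2, 5}, {3, 4, 5}}. ?h ` N \<notin> {F \<in> C. F \<subseteq> ?W}"
      using faces nonfaces by (simp_all add: insert_commute)
    show "\<forall>F\<in>Pow {1..5}. ((\<exists>T\<in>{{1, 2}, {2, 3, 5}, {3, 4}, {1, 4, 5}}. F \<subseteq> T) \<and> F \<in> J2)
        \<or> ((\<exists>N\<in>{{1, 3}, {2, 4}, {1, 2, 5}, {3, 4, 5}}. N \<subseteq> F) \<and> F \<notin> J2)"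
      unfolding small_nat_intervals J2_def gen_cplx_def by (simp add: Pow_insert)
  qed (rule induced_down_closed)
  then show False using avoiding induced_is_minor[OF W] unfolding beta_avoiding_def by blast
qed

lemma no_induced_O6:
  assumes distinct: "distinct [z1, z2, z3, z4, z5, z6]"
    and faces: "{z1, z3, z5} \<in> C" "{z1, z3, z6} \<in> C" "{z1, z4, z5} \<in> C" "{z1, z4, z6} \<in> C"
      "{z2, z3, z5} \<in> C" "{z2, z3, z6} \<in> C" "{z2, z4, z5} \<in> C" "{z2, z4, z6} \<in> C"
    and nonfaces: "{z1, z2} \<notin> C" "{z3, z4} \<notin> C" "{z5, z6} \<notin> C"
  shows False
proof -
  let ?W = "{z1, z2, z3, z4, z5, z6}"
  let ?h = "\<lambda>i::nat. if i = 1 then z1 else if i = 2 then z2 else if i = 3 then z3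
    else if i = 4 then z4 else if i = 5 then z5 else z6"
  let ?Pos = "{{1, 3, 5}, {1, 3, 6}, {1, 4, 5}, {1, 4, 6}, {2, 3, 5}, {2, 3, 6}, {2, 4, 5}, {2, 4, 6::nat}}"
  have W: "?W \<subseteq> V" using faces face_in_ground by blast
  have "cplx_iso ?W {F \<in> C. F \<subseteq> ?W} {1..6} O6"
  proof (rule cplx_iso_by_cover[where h = ?h and Pos = ?Pos and Neg = "{{1, 2}, {3, 4}, {5, 6}}"])
    show "inj_on ?h {1..6}" "?h ` {1..6} = ?W"
      unfolding small_nat_intervals using distinct by auto
    show "\<forall>T\<in>?Pos. ?h ` T \<in> {F \<in> C. F \<subseteq> ?W}" "\<forall>N\<in>{{1, 2}, {3, 4}, {5, 6}}. ?h ` N \<notin> {F \<in> C. F \<subseteq> ?W}"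
      using faces nonfaces by (simp_all add: insert_commute)
    show "\<forall>F\<in>Pow {1..6}. ((\<exists>T\<in>?Pos. F \<subseteq> T) \<and> F \<in> O6) \<or> ((\<exists>N\<in>{{1, 2}, {3, 4}, {5, 6}}. N \<subseteq> F) \<and> F \<notin> O6)"
      unfolding small_nat_intervals O6_def by (simp add: Pow_insert)
  qed (rule induced_down_closed)
  then show False using avoiding induced_is_minor[OF W] unfolding beta_avoiding_def by blast
qed

lemma no_J1_configuration:
  assumes nonadj: "nonadj C q p" "nonadj C q r" "nonadj C s t"
    and adj: "adj C p r" "adj C p s" "adj C p t" "adj C q s" "adj C q t" "adj C r s" "adj C r t"
  shows False
proof -
  have distinct: "distinct [q, s, p, r, t]"
    using assms unfolding adj_def nonadj_def by (auto simp: insert_commute)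
  have cone: "{x, p, r} \<in> C" if "x \<in> {s, t}" for x
  proof (rule ccontr)
    assume "{x, p, r} \<notin> C"
    moreover have "{x, q, p} \<notin> C" "{x, q, r} \<notin> C"
      using nonadj face_subset unfolding nonadj_def by blast+
    ultimately show False
      using link_not_three_points[of x q p r] that distinct adj
      unfolding adj_def by (auto simp: insert_commute)
  qed
  show False
    using no_induced_J1[OF distinct] cone[of s] cone[of t] assms unfolding adj_def nonadj_def
    by (auto simp: insert_commute)
qed

text \<open>The link of \<open>v\<close> contains the 4-cycle \<open>p r q s\<close> or one of its two perfect matchings:
  three isolated points and an induced P4 are both excluded there.\<close>
lemma link_square_faces:
  assumes distinct: "distinct [v, p, q, r, s]"
    and edges: "{v, p} \<in> C" "{v, q} \<in> C" "{v, r} \<in> C" "{v, s} \<in> C"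
    and nonedges: "{p, q} \<notin> C" "{r, s} \<notin> C"
  shows "({v, p, r} \<in> C \<longleftrightarrow> {v, q, s} \<in> C) \<and> ({v, p, s} \<in> C \<longleftrightarrow> {v, q, r} \<in> C)
    \<and> ({v, p, r} \<in> C \<or> {v, p, s} \<in> C)"
proof -
  have npq: "{v, p, q} \<notin> C" and nrs: "{v, r, s} \<notin> C"
    using nonedges face_subset by blast+
  have "{v, p, r} \<in> C \<or> {v, q, r} \<in> C" "{v, p, s} \<in> C \<or> {v, q, s} \<in> C"
    "{v, p, r} \<in> C \<or> {v, p, s} \<in> C" "{v, q, r} \<in> C \<or> {v, q, s} \<in> C"
    using link_not_three_points[of v p q r] link_not_three_points[of v p q s]
      link_not_three_points[of v p r s] link_not_three_points[of v q r s]
      distinct edges npq nrs by auto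
  moreover have "\<not> ({v, p, s} \<in> C \<and> {v, q, s} \<in> C \<and> {v, q, r} \<in> C \<and> {v, p, r} \<notin> C)"
    "\<not> ({v, p, r} \<in> C \<and> {v, q, s} \<in> C \<and> {v, q, r} \<in> C \<and> {v, p, s} \<notin> C)"
    "\<not> ({v, p, r} \<in> C \<and> {v, q, s} \<in> C \<and> {v, p, s} \<in> C \<and> {v, q, r} \<notin> C)"
    "\<not> ({v, p, r} \<in> C \<and> {v, q, r} \<in> C \<and> {v, p, s} \<in> C \<and> {v, q, s} \<notin> C)"
    using link_not_P4[of v p s q r] link_not_P4[of v p r q s]
      link_not_P4[of v r p s q] link_not_P4[of v s p r q]
      distinct npq nrs by (auto simp: insert_commute)
  ultimately show ?thesis by blast
qed

text \<open>The links of \<open>y1\<close>, \<open>y3\<close>, \<open>y5\<close>, \<open>y6\<close> tie the eight candidate triangles together: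
  either all of them are faces, giving an induced O6, or exactly four are, giving an induced J2.\<close>
lemma no_octahedron:
  assumes "nonadj C y1 y2" "nonadj C y3 y4" "nonadj C y5 y6"
    and "adj C y1 y3" "adj C y1 y4" "adj C y1 y5" "adj C y1 y6" "adj C y2 y3" "adj C y2 y4"
      "adj C y2 y5" "adj C y2 y6" "adj C y3 y5" "adj C y3 y6" "adj C y4 y5" "adj C y4 y6"
  shows False
proof -
  have distinct: "distinct [y1, y2, y3, y4, y5, y6]"
    using assms unfolding adj_def nonadj_def by (auto simp: insert_commute)
  note facts = distinct assms[unfolded adj_def nonadj_def]
  have "({y1, y3, y5} \<in> C \<longleftrightarrow> {y1, y4, y6} \<in> C) \<and> ({y1, y3, y6} \<in> C \<longleftrightarrow> {y1, y4, y5} \<in> C)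
    \<and> ({y1, y3, y5} \<in> C \<or> {y1, y3, y6} \<in> C)"
    by (rule link_square_faces) (use facts in \<open>auto simp: insert_commute\<close>)
  moreover have "({y3, y1, y5} \<in> C \<longleftrightarrow> {y3, y2, y6} \<in> C) \<and> ({y3, y1, y6} \<in> C \<longleftrightarrow> {y3, y2, y5} \<in> C)
    \<and> ({y3, y1, y5} \<in> C \<or> {y3, y1, y6} \<in> C)"
    by (rule link_square_faces) (use facts in \<open>auto simp: insert_commute\<close>)
  moreover have "({y5, y1, y3} \<in> C \<longleftrightarrow> {y5, y2, y4} \<in> C) \<and> ({y5, y1, y4} \<in> C \<longleftrightarrow> {y5, y2, y3} \<in> C)
    \<and> ({y5, y1, y3} \<in> C \<or> {y5, y1, y4} \<in> C)"
    by (rule link_square_faces) (use facts in \<open>auto simp: insert_commute\<close>)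
  moreover have "({y6, y1, y3} \<in> C \<longleftrightarrow> {y6, y2, y4} \<in> C) \<and> ({y6, y1, y4} \<in> C \<longleftrightarrow> {y6, y2, y3} \<in> C)
    \<and> ({y6, y1, y3} \<in> C \<or> {y6, y1, y4} \<in> C)"
    by (rule link_square_faces) (use facts in \<open>auto simp: insert_commute\<close>)
  ultimately show False
    using no_induced_O6[OF distinct] no_induced_J2[of y5 y3 y6 y4 y2] no_induced_J2[of y6 y3 y5 y4 y2] facts
    by (auto simp: insert_commute)
qed

lemma nonadj_path_closes:
  assumes uw: "nonadj C u w" and ux: "nonadj C u x" and xy: "nonadj C x y"
  shows "nonadj C w y"
proof (rule ccontr)
  assume wy: "\<not> nonadj C w y"
  have vertices: "{u} \<in> C" "{w} \<in> C" "{x} \<in> C" "{y} \<in> C"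
    using assms unfolding nonadj_def by blast+
  have distinct: "w \<noteq> y" "u \<noteq> y" "x \<noteq> w"
    using assms wy nonadj_triangle_free[of u x w] by (auto simp: nonadj_commute)
  have uy: "\<not> nonadj C u y" and xw: "\<not> nonadj C x w"
    using ux xy uw nonadj_triangle_free[of u x y] nonadj_triangle_free[of u x w]
    by (auto simp: nonadj_commute)
  show False
  proof (rule nonadj_no_induced_P4[of y x u w])
    show "nonadj C y x" "nonadj C x u" using xy ux by (simp_all add: nonadj_commute)
    show "nonadj C u w" by (fact uw)
    show "adj C y u" "adj C x w" "adj C y w"
      using adj_if_not_nonadj[OF vertices(1,4) distinct(2) uy]
        adj_if_not_nonadj[OF vertices(3,2) distinct(3) xw]
        adj_if_not_nonadj[OF vertices(2,4) distinct(1) wy]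
      by (simp_all add: adj_commute)
  qed
qed

lemma skel_vertices_iff: "v \<in> skel_vertices V C \<longleftrightarrow> {v} \<in> C"
  unfolding skel_vertices_def using face_in_ground by blast

lemma skel_edges_eqI:
  assumes pairs: "E \<subseteq> clique_edges (skel_vertices V C)"
    and edges: "\<And>s t. {s} \<in> C \<Longrightarrow> {t} \<in> C \<Longrightarrow> s \<noteq> t \<Longrightarrow> {s, t} \<in> E \<longleftrightarrow> \<not> nonadj C s t"
  shows "skel_edges C = E"
proof
  show "skel_edges C \<subseteq> E"
  proof
    fix e assume "e \<in> skel_edges C"
    then obtain s t where "s \<noteq> t" "e = {s, t}" "e \<in> C"
      unfolding skel_edges_def card_2_iff by blast
    then show "e \<in> E" using edges face_subset unfolding nonadj_def by blast
  qed
  show "E \<subseteq> skel_edges C"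
  proof
    fix e assume "e \<in> E"
    then obtain s t where "{s} \<in> C" "{t} \<in> C" "s \<noteq> t" "e = {s, t}"
      using pairs by (auto elim!: clique_edgesE simp: skel_vertices_iff)
    then show "e \<in> skel_edges C"
      using edges \<open>e \<in> E\<close> unfolding skel_edges_def nonadj_def by auto
  qed
qed

lemma skel_edges_complete:
  assumes "\<nexists>u w. nonadj C u w"
  shows "skel_edges C = clique_edges (skel_vertices V C)"
  by (rule skel_edges_eqI) (use assms in \<open>auto simp: doubleton_in_clique_edges skel_vertices_iff\<close>)

lemma skel_edges_two_cliques:
  assumes uw: "nonadj C u w"
    and cross: "\<And>x y. nonadj C x y \<Longrightarrow> (nonadj C u x \<and> nonadj C w y) \<or> (nonadj C w x \<and> nonadj C u y)"
  shows "\<exists>A B. A \<union> B = skel_vertices V C \<and> skel_edges C = clique_edges A \<union> clique_edges B"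
proof (intro exI conjI)
  let ?A = "{v \<in> skel_vertices V C. \<not> nonadj C u v}"
  let ?B = "{v \<in> skel_vertices V C. \<not> nonadj C w v}"
  have apart: "\<not> (nonadj C u v \<and> nonadj C w v)" for v
    using nonadj_triangle_free[of u v w] uw nonadj_commute[of C w v] by blast
  then show "?A \<union> ?B = skel_vertices V C" by blast
  show "skel_edges C = clique_edges ?A \<union> clique_edges ?B"
  proof (rule skel_edges_eqI)
    show "clique_edges ?A \<union> clique_edges ?B \<subseteq> clique_edges (skel_vertices V C)"
      using clique_edges_mono[of ?A] clique_edges_mono[of ?B] by blast
  next
    fix s t assume st: "{s} \<in> C" "{t} \<in> C" "s \<noteq> t"
    have "nonadj C s t \<longleftrightarrow> (nonadj C u s \<and> nonadj C w t) \<or> (nonadj C w s \<and> nonadj C u t)"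
      using cross[of s t] nonadj_path_closes[of u s w t] nonadj_path_closes[of w s u t] uw
      by (auto simp: nonadj_commute)
    then show "{s, t} \<in> clique_edges ?A \<union> clique_edges ?B \<longleftrightarrow> \<not> nonadj C s t"
      using apart[of s] apart[of t] st by (auto simp: doubleton_in_clique_edges skel_vertices_iff)
  qed
qed

text \<open>If the corner \<open>u\<close> missed \<open>p\<close>, then \<open>u\<close>, its non-neighbours \<open>p\<close> and \<open>w\<close>, and the
  diagonal \<open>x y\<close> would form a J1 configuration; the other corners are symmetric.\<close>
lemma square_apex_adj:
  assumes square: "nonadj C u w" "nonadj C x y" "adj C u x" "adj C u y" "adj C w x" "adj C w y"
    and apex: "{p} \<in> C" "p \<notin> {u, w, x, y}"
  shows "adj C u p \<and> adj C w p \<and> adj C x p \<and> adj C y p"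
proof -
  have adj_apex: "adj C a p"
    if "nonadj C a b" "nonadj C c d" "adj C a c" "adj C a d" "adj C b c" "adj C b d" "p \<notin> {a, b, c, d}"
    for a b c d
  proof (rule ccontr)
    assume "\<not> adj C a p"
    then have ap: "nonadj C a p"
      using that apex unfolding adj_def nonadj_def by blast
    have "\<not> nonadj C p c" "\<not> nonadj C p d"
      using nonadj_path_closes[OF that(1) ap] adj_imp_not_nonadj[OF that(5)] adj_imp_not_nonadj[OF that(6)]
      by blast+
    moreover have "\<not> nonadj C p b"
      using nonadj_triangle_free[of a p b] that ap by blast
    ultimately have "adj C p b" "adj C p c" "adj C p d"
      using adj_if_not_nonadj apex that unfolding nonadj_def adj_def by blast+
    then show False
      using no_J1_configuration[of a p b c d] ap that by blast
  qed
  show ?thesis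
    using adj_apex[of u w x y] adj_apex[of w u x y] adj_apex[of x y u w] adj_apex[of y x u w]
      square apex by (auto simp: nonadj_commute adj_commute)
qed

lemma square_cone_adj:
  assumes square: "nonadj C u w" "nonadj C x y" "adj C u x" "adj C u y" "adj C w x" "adj C w y"
    and "{s} \<in> C" "{t} \<in> C" "s \<noteq> t" "{s, t} \<noteq> {u, w}" "{s, t} \<noteq> {x, y}"
  shows "adj C s t"
proof -
  let ?Q = "{u, w, x, y}"
  have apex: "adj C a p" if "a \<in> ?Q" "{p} \<in> C" "p \<notin> ?Q" for a p
    using square_apex_adj[OF square that(2,3)] that(1) by blast
  consider "s \<in> ?Q" "t \<in> ?Q" | "s \<in> ?Q" "t \<notin> ?Q" | "s \<notin> ?Q" "t \<in> ?Q" | "s \<notin> ?Q" "t \<notin> ?Q"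
    by blast
  then show ?thesis
  proof cases
    case 1
    then show ?thesis using square assms(9-11) by (auto simp: adj_commute doubleton_eq_iff)
  next
    case 2
    then show ?thesis using apex assms by blast
  next
    case 3
    then show ?thesis using apex[of t s] assms adj_commute[of C t s] by blast
  next
    case 4
    show ?thesis
    proof (rule ccontr)
      assume "\<not> adj C s t"
      then have "nonadj C s t" using assms unfolding adj_def nonadj_def by blast
      then show False
        using no_octahedron[of u w x y s t] square apex[of _ s] apex[of _ t] assms 4 by blast
    qed
  qed
qed

lemma skel_edges_cone_square:
  assumes uw: "nonadj C u w" and xy: "nonadj C x y"
    and across: "\<not> nonadj C u x" "\<not> nonadj C u y" "\<not> nonadj C w x" "\<not> nonadj C w y"
  shows "\<exists>a b c d P. distinct [a, b, c, d] \<and> {a, b, c, d} \<inter> P = {}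
      \<and> skel_vertices V C = {a, b, c, d} \<union> P
      \<and> skel_edges C = {{a, b}, {b, c}, {c, d}, {d, a}} \<union> clique_edges P
                         \<union> {{p, q} | p q. p \<in> {a, b, c, d} \<and> q \<in> P}"
proof (intro exI conjI)
  have vertices: "{u} \<in> C" "{w} \<in> C" "{x} \<in> C" "{y} \<in> C"
    using uw xy unfolding nonadj_def by blast+
  show distinct: "distinct [u, x, w, y]"
    using assms unfolding nonadj_def by (auto simp: insert_commute)
  have square: "adj C u x" "adj C u y" "adj C w x" "adj C w y"
    using vertices distinct across by (auto intro!: adj_if_not_nonadj)
  define P where "P = skel_vertices V C - {u, x, w, y}"
  show disjoint: "{u, x, w, y} \<inter> P = {}" unfolding P_def by blast
  show skel_vertices: "skel_vertices V C = {u, x, w, y} \<union> P"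
    using vertices unfolding P_def by (auto simp: skel_vertices_iff)
  show "skel_edges C = {{u, x}, {x, w}, {w, y}, {y, u}} \<union> clique_edges P
    \<union> {{p, q} | p q. p \<in> {u, x, w, y} \<and> q \<in> P}"
  proof (rule skel_edges_eqI)
    show "{{u, x}, {x, w}, {w, y}, {y, u}} \<union> clique_edges P
        \<union> {{p, q} | p q. p \<in> {u, x, w, y} \<and> q \<in> P} \<subseteq> clique_edges (skel_vertices V C)"
      unfolding skel_vertices using distinct disjoint
      by (auto simp: clique_edges_def)
  next
    fix s t assume st: "{s} \<in> C" "{t} \<in> C" "s \<noteq> t"
    have "\<not> nonadj C s t \<longleftrightarrow> {s, t} \<noteq> {u, w} \<and> {s, t} \<noteq> {x, y}"
    proof
      assume "\<not> nonadj C s t"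
      then show "{s, t} \<noteq> {u, w} \<and> {s, t} \<noteq> {x, y}"
        using uw xy by (auto simp: doubleton_eq_iff nonadj_commute)
    next
      assume "{s, t} \<noteq> {u, w} \<and> {s, t} \<noteq> {x, y}"
      then show "\<not> nonadj C s t"
        using adj_imp_not_nonadj[OF square_cone_adj[OF uw xy square st]] by blast
    qed
    moreover have "s \<in> {u, x, w, y} \<union> P" "t \<in> {u, x, w, y} \<union> P"
      using st skel_vertices_iff[of s] skel_vertices_iff[of t] unfolding skel_vertices by blast+
    ultimately show "{s, t} \<in> {{u, x}, {x, w}, {w, y}, {y, u}} \<union> clique_edges P
        \<union> {{p, q} | p q. p \<in> {u, x, w, y} \<and> q \<in> P} \<longleftrightarrow> \<not> nonadj C s t"
      using doubleton_in_cone_square_edges[OF distinct disjoint _ _ st(3)] by simp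
  qed
qed

lemma nonadj_edge_cases:
  assumes uw: "nonadj C u w"
  obtains (crossing) "\<And>x y. nonadj C x y \<Longrightarrow> (nonadj C u x \<and> nonadj C w y) \<or> (nonadj C w x \<and> nonadj C u y)"
    | (disjoint) x y where "nonadj C x y"
      "\<not> nonadj C u x" "\<not> nonadj C u y" "\<not> nonadj C w x" "\<not> nonadj C w y"
proof (cases "\<forall>x y. nonadj C x y \<longrightarrow> (nonadj C u x \<and> nonadj C w y) \<or> (nonadj C w x \<and> nonadj C u y)")
  case True
  then show ?thesis using crossing by blast
next
  case False
  then obtain x y where xy: "nonadj C x y"
    and not_crossing: "\<not> ((nonadj C u x \<and> nonadj C w y) \<or> (nonadj C w x \<and> nonadj C u y))"
    by blast
  have wu: "nonadj C w u" and yx: "nonadj C y x"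
    using uw xy by (simp_all add: nonadj_commute)
  have "\<not> nonadj C u x" "\<not> nonadj C w x" "\<not> nonadj C u y" "\<not> nonadj C w y"
    using nonadj_path_closes[OF uw _ xy] nonadj_path_closes[OF wu _ xy]
      nonadj_path_closes[OF uw _ yx] nonadj_path_closes[OF wu _ yx] not_crossing by blast+
  then show ?thesis using disjoint xy by blast
qed

end

theorem lemma5p3:
  fixes V :: "'a set" and C :: "'a set set"
  assumes "simplicial_complex V C" and "beta_avoiding V C"
  shows "skel_edges C = clique_edges (skel_vertices V C)
      \<or> (\<exists>A B. A \<union> B = skel_vertices V C \<and> skel_edges C = clique_edges A \<union> clique_edges B)
      \<or> (\<exists>a b c d P. distinct [a, b, c, d] \<and> {a, b, c, d} \<inter> P = {}
            \<and> skel_vertices V C = {a, b, c, d} \<union> P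
            \<and> skel_edges C = {{a, b}, {b, c}, {c, d}, {d, a}} \<union> clique_edges P
                               \<union> {{x, y} | x y. x \<in> {a, b, c, d} \<and> y \<in> P})"
proof (cases "C = {}")
  case True
  then show ?thesis by (simp add: skel_edges_def skel_vertices_def clique_edges_def)
next
  case False
  then have "{} \<in> C" using assms(1) unfolding simplicial_complex_def by blast
  then interpret beta_avoiding_complex V C using assms by unfold_locales
  show ?thesis
  proof (cases "\<exists>u w. nonadj C u w")
    case False
    then show ?thesis using skel_edges_complete by blast
  next
    case True
    then obtain u w where uw: "nonadj C u w" by blast
    then show ?thesis
    proof (cases rule: nonadj_edge_cases)
      case crossing
      then show ?thesis using skel_edges_two_cliques[OF uw] by blast
    next
      case (disjoint x y)
      show ?thesis using skel_edges_cone_square[OF uw disjoint] by blast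
    qed
  qed
qed

end
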